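(* For all positive integers $n>k$, $\mathrm{msum}(n,n-k)=\mathrm{msum}(n,k)$ and $\mathrm{disc}(n,n-k)=\mathrm{disc}(n,k)$.
   Context: For positive integers $n>k$, let $S_n$ be the set of permutations $\pi=(\pi_1,\dots,\pi_n)$ of $1,\dots,n$, with cyclic indexing $\pi_{n+i}=\pi_i$, and $s_i=\sum_{j=0}^{k-1}\pi_{i+j}$ for $i=1,\dots,n$. Define $\mathrm{msum}(\pi,k)=\max\{s_i\}-\frac{k(n+1)}{2}$, $\mathrm{msum}(n,k)=\min_{\pi\in S_n}\mathrm{msum}(\pi,k)$, $\mathrm{disc}(\pi,k)=\max_i|s_i-\frac{k(n+1)}{2}|$, $\mathrm{disc}(n,k)=\min_{\pi\in S_n}\mathrm{disc}(\pi,k)$. *)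

theory Defs
  imports Complex_Main
begin

text \<open>Permutations of 1..n are encoded as maps from positions {0..<n} (0-indexed)
  onto values {1..n}, extended by a fixed default outside {0..<n}
  (extensional, so that the set of permutations is finite).\<close>

definition perms :: "nat \<Rightarrow> (nat \<Rightarrow> nat) set" where
  "perms n = {p. bij_betw p {..<n} {1..n} \<and> (\<forall>i. i \<ge> n \<longrightarrow> p i = 0)}"

definition wsum :: "nat \<Rightarrow> (nat \<Rightarrow> nat) \<Rightarrow> nat \<Rightarrow> nat \<Rightarrow> real" where
  "wsum n p k i = (\<Sum>j<k. real (p ((i + j) mod n)))"

definition msum_perm :: "nat \<Rightarrow> (nat \<Rightarrow> nat) \<Rightarrow> nat \<Rightarrow> real" where
  "msum_perm n p k = Max ((\<lambda>i. wsum n p k i) ` {..<n}) - real k * (real n + 1) / 2"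

definition disc_perm :: "nat \<Rightarrow> (nat \<Rightarrow> nat) \<Rightarrow> nat \<Rightarrow> real" where
  "disc_perm n p k = Max ((\<lambda>i. \<bar>wsum n p k i - real k * (real n + 1) / 2\<bar>) ` {..<n})"

definition msum :: "nat \<Rightarrow> nat \<Rightarrow> real" where
  "msum n k = Min ((\<lambda>p. msum_perm n p k) ` perms n)"

definition disc :: "nat \<Rightarrow> nat \<Rightarrow> real" where
  "disc n k = Min ((\<lambda>p. disc_perm n p k) ` perms n)"

end

theory Submission
  imports Defs
begin

text \<open>Replace every value v of a permutation by n + 1 - v. A window of length k and the
  complementary window of length n - k partition all positions, so their sums add up to
  n (n + 1) / 2; complementing the values turns the sum of the complementary window into
  (n - k) (n + 1) minus it. Hence the deviations from the mean of the windows of length k of p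
  are exactly the deviations of the windows of length n - k of the complemented permutation,
  read with a cyclic shift by k. Complementation is a bijection of the permutations, so both
  minima in question range over the same set of values.\<close>

definition perm_complement :: "nat \<Rightarrow> (nat \<Rightarrow> nat) \<Rightarrow> nat \<Rightarrow> nat" where
  "perm_complement n p j = (if j < n then n + 1 - p j else 0)"

definition wdev :: "nat \<Rightarrow> (nat \<Rightarrow> nat) \<Rightarrow> nat \<Rightarrow> nat \<Rightarrow> real" where
  "wdev n p k i = wsum n p k i - real k * (real n + 1) / 2"

lemma perm_complement_in_perms:
  assumes "p \<in> perms n"
  shows "perm_complement n p \<in> perms n"
proof -
  have "bij_betw (\<lambda>v. n + 1 - v) {1..n} {1..n}"
    by (rule bij_betw_byWitness[where f' = "\<lambda>v. n + 1 - v"]) auto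
  then have "bij_betw ((\<lambda>v. n + 1 - v) \<circ> p) {..<n} {1..n}"
    using assms bij_betw_trans unfolding perms_def by blast
  then have "bij_betw (perm_complement n p) {..<n} {1..n}"
    by (rule bij_betw_cong[THEN iffD1, rotated]) (simp add: perm_complement_def)
  then show ?thesis
    by (simp add: perms_def perm_complement_def)
qed

lemma sum_perms:
  assumes "p \<in> perms n"
  shows "(\<Sum>j<n. real (p j)) = real n * (real n + 1) / 2"
proof -
  have "(\<Sum>j<n. real (p j)) = (\<Sum>v = 1..n. real v)"
    using assms sum.reindex_bij_betw[of p "{..<n}" "{1..n}" real] by (simp add: perms_def)
  then show ?thesis
    using double_gauss_sum_from_Suc_0[of n, where 'a = real] by simp
qed

lemma mod_add_left_cancel_nat:
  fixes a b c n :: nat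
  assumes "(c + a) mod n = (c + b) mod n"
  shows "a mod n = b mod n"
proof -
  have "(int c + int a) mod int n = (int c + int b) mod int n"
    using assms by (metis of_nat_add of_nat_mod)
  then have "(- int c + (int c + int a)) mod int n = (- int c + (int c + int b)) mod int n"
    by (rule mod_add_cong[OF refl])
  then show ?thesis
    by (simp flip: of_nat_mod)
qed

lemma bij_betw_rotate_mod:
  fixes c n :: nat
  assumes "0 < n"
  shows "bij_betw (\<lambda>j. (c + j) mod n) {..<n} {..<n}"
proof -
  have inj: "inj_on (\<lambda>j. (c + j) mod n) {..<n}"
  proof (rule inj_onI)
    fix a b :: nat
    assume "a \<in> {..<n}" "b \<in> {..<n}" "(c + a) mod n = (c + b) mod n"
    then show "a = b"
      using mod_add_left_cancel_nat[of c a n b] by simp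
  qed
  have "(\<lambda>j. (c + j) mod n) ` {..<n} = {..<n}"
    by (rule endo_inj_surj[OF _ _ inj]) (use assms in auto)
  with inj show ?thesis
    by (simp add: bij_betw_def)
qed

lemma wsum_mod_start: "wsum n p k (i mod n) = wsum n p k i"
  by (simp add: wsum_def mod_add_left_eq)

lemma wsum_add_length: "wsum n p (a + b) i = wsum n p a i + wsum n p b (i + a)"
  by (induction b) (simp_all add: wsum_def add.assoc)

lemma wsum_full:
  assumes "p \<in> perms n" and "0 < n"
  shows "wsum n p n i = real n * (real n + 1) / 2"
  using sum.reindex_bij_betw[OF bij_betw_rotate_mod[OF assms(2)], of "\<lambda>j. real (p j)"]
    sum_perms[OF assms(1)]
  by (simp add: wsum_def)

lemma wsum_perm_complement:
  assumes "p \<in> perms n" and "0 < n"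
  shows "wsum n (perm_complement n p) m i = real m * (real n + 1) - wsum n p m i"
proof -
  have "\<And>j. j < n \<Longrightarrow> p j \<le> n"
    using assms(1) unfolding perms_def bij_betw_def by auto
  then have "real (perm_complement n p ((i + j) mod n)) = real n + 1 - real (p ((i + j) mod n))"
    for j
    using assms(2) by (simp add: perm_complement_def of_nat_diff le_SucI)
  then show ?thesis
    by (simp add: wsum_def sum_subtractf)
qed

lemma wdev_perm_complement:
  assumes "p \<in> perms n" and "0 < n" and "k \<le> n"
  shows "wdev n (perm_complement n p) (n - k) (i + k) = wdev n p k i"
proof -
  have "wsum n p k i + wsum n p (n - k) (i + k) = real n * (real n + 1) / 2"
    using wsum_add_length[of n p k "n - k" i] wsum_full[OF assms(1,2)] assms(3) by simp
  moreover have "real (n - k) * (real n + 1) + real k * (real n + 1) = real n * (real n + 1)"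
    using assms(3) by (simp flip: distrib_right of_nat_add)
  ultimately show ?thesis
    unfolding wdev_def wsum_perm_complement[OF assms(1,2)] by linarith
qed

lemma image_wdev_perm_complement:
  assumes "p \<in> perms n" and "0 < n" and "k \<le> n"
  shows "wdev n (perm_complement n p) (n - k) ` {..<n} = wdev n p k ` {..<n}"
proof -
  have "wdev n (perm_complement n p) (n - k) ` {..<n}
      = wdev n (perm_complement n p) (n - k) ` (\<lambda>i. (k + i) mod n) ` {..<n}"
    using bij_betw_rotate_mod[OF assms(2)] by (simp add: bij_betw_def)
  also have "\<dots> = wdev n p k ` {..<n}"
    unfolding image_image
  proof (rule image_cong[OF refl])
    fix i
    have "wdev n (perm_complement n p) (n - k) ((k + i) mod n)
        = wdev n (perm_complement n p) (n - k) (i + k)"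
      unfolding wdev_def wsum_mod_start by (simp add: add.commute)
    then show "wdev n (perm_complement n p) (n - k) ((k + i) mod n) = wdev n p k i"
      using wdev_perm_complement[OF assms] by simp
  qed
  finally show ?thesis .
qed

lemma msum_perm_eq_Max_wdev:
  assumes "0 < n"
  shows "msum_perm n p k = Max (wdev n p k ` {..<n})"
proof -
  have "{..<n} \<noteq> {}"
    using assms by auto
  then show ?thesis
    using Max_add_commute[of "{..<n}" "wsum n p k" "- (real k * (real n + 1) / 2)"]
    by (simp add: msum_perm_def wdev_def)
qed

lemma disc_perm_eq_Max_abs_wdev: "disc_perm n p k = Max (abs ` wdev n p k ` {..<n})"
  by (simp add: disc_perm_def wdev_def image_image)

lemma msum_perm_perm_complement:
  assumes "p \<in> perms n" and "0 < n" and "k \<le> n"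
  shows "msum_perm n (perm_complement n p) (n - k) = msum_perm n p k"
  using image_wdev_perm_complement[OF assms] assms(2) by (simp add: msum_perm_eq_Max_wdev)

lemma disc_perm_perm_complement:
  assumes "p \<in> perms n" and "0 < n" and "k \<le> n"
  shows "disc_perm n (perm_complement n p) (n - k) = disc_perm n p k"
  using image_wdev_perm_complement[OF assms] by (simp add: disc_perm_eq_Max_abs_wdev)

lemma msum_disc_values_subset:
  assumes "0 < n" and "k \<le> n"
  shows "(\<lambda>p. msum_perm n p k) ` perms n \<subseteq> (\<lambda>p. msum_perm n p (n - k)) ` perms n"
    and "(\<lambda>p. disc_perm n p k) ` perms n \<subseteq> (\<lambda>p. disc_perm n p (n - k)) ` perms n"
  using perm_complement_in_perms msum_perm_perm_complement[OF _ assms]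
    disc_perm_perm_complement[OF _ assms]
  by (metis image_eqI image_subsetI)+

theorem proposition2p1:
  fixes n k :: nat
  assumes "0 < k" and "k < n"
  shows "msum n (n - k) = msum n k \<and> disc n (n - k) = disc n k"
proof -
  have "0 < n" "k \<le> n" "n - k \<le> n" "n - (n - k) = k"
    using assms by auto
  then have "(\<lambda>p. msum_perm n p k) ` perms n = (\<lambda>p. msum_perm n p (n - k)) ` perms n"
    and "(\<lambda>p. disc_perm n p k) ` perms n = (\<lambda>p. disc_perm n p (n - k)) ` perms n"
    using msum_disc_values_subset[of n k] msum_disc_values_subset[of n "n - k"]
    by (metis subset_antisym)+
  then show ?thesis
    by (simp add: msum_def disc_def)
qed

end
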